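(* Let $G$ be a $B_2$-EPG graph given with a representation and let $X$ be a clique of $G$. Then either there is a set of at most three rows such that every U-vertex of $X$ intersects one of these rows, or there is a set of at most three columns such that every Z-vertex of $X$ intersects one of these columns.
   Context: A graph $G$ is a $B_k$-EPG graph if each vertex $u$ can be assigned a path $P_u$ in the planar orthogonal grid with at most $k$ bends such that $uv\in E(G)$ iff $P_u$ and $P_v$ share at least one grid edge (a representation); for $B_2$-EPG graphs one assumes w.l.o.g. every path has exactly two bends, so every vertex is a Z-vertex or a U-vertex. A vertex $u$ intersects a row (column) if $P_u$ contains a grid edge of it. A Z-vertex intersects exactly two rows and one column; a U-vertex intersects exactly one row and two columns. *)

theory Defs
  imports Main
begin

text \<open>HE x y is the horizontal unit edge from (x,y) to (x+1,y), lying on row y;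
  VE x y is the vertical unit edge from (x,y) to (x,y+1), lying on column x.\<close>
datatype gedge = HE int int | VE int int

definition hseg :: "int \<Rightarrow> int \<Rightarrow> int \<Rightarrow> gedge set" where
  "hseg a b y = {HE x y | x. min a b \<le> x \<and> x < max a b}"

definition vseg :: "int \<Rightarrow> int \<Rightarrow> int \<Rightarrow> gedge set" where
  "vseg x a b = {VE x y | y. min a b \<le> y \<and> y < max a b}"

text \<open>ZPath x1 y1 x2 y2 x3: (x1,y1) -- horizontal --> (x2,y1) -- vertical --> (x2,y2)
     -- horizontal --> (x3,y2)   (a Z-vertex path: two rows, one column).
  UPath x1 y1 x2 y2 y3: (x1,y1) -- vertical --> (x1,y2) -- horizontal --> (x2,y2)
     -- vertical --> (x2,y3)     (a U-vertex path: one row, two columns).\<close>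
datatype path2 = ZPath int int int int int | UPath int int int int int

fun valid_path2 :: "path2 \<Rightarrow> bool" where
  "valid_path2 (ZPath x1 y1 x2 y2 x3) \<longleftrightarrow> x1 \<noteq> x2 \<and> y1 \<noteq> y2 \<and> x2 \<noteq> x3"
| "valid_path2 (UPath x1 y1 x2 y2 y3) \<longleftrightarrow> y1 \<noteq> y2 \<and> x1 \<noteq> x2 \<and> y2 \<noteq> y3"

fun edges :: "path2 \<Rightarrow> gedge set" where
  "edges (ZPath x1 y1 x2 y2 x3) = hseg x1 x2 y1 \<union> vseg x2 y1 y2 \<union> hseg x2 x3 y2"
| "edges (UPath x1 y1 x2 y2 y3) = vseg x1 y1 y2 \<union> hseg x1 x2 y2 \<union> vseg x2 y2 y3"

fun is_Z :: "path2 \<Rightarrow> bool" where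
  "is_Z (ZPath _ _ _ _ _) = True"
| "is_Z (UPath _ _ _ _ _) = False"

fun is_U :: "path2 \<Rightarrow> bool" where
  "is_U (ZPath _ _ _ _ _) = False"
| "is_U (UPath _ _ _ _ _) = True"

definition intersects_row :: "path2 \<Rightarrow> int \<Rightarrow> bool" where
  "intersects_row p y \<longleftrightarrow> (\<exists>x. HE x y \<in> edges p)"

definition intersects_col :: "path2 \<Rightarrow> int \<Rightarrow> bool" where
  "intersects_col p x \<longleftrightarrow> (\<exists>y. VE x y \<in> edges p)"

definition B2_EPG_rep :: "'v set \<Rightarrow> ('v \<Rightarrow> 'v \<Rightarrow> bool) \<Rightarrow> ('v \<Rightarrow> path2) \<Rightarrow> bool" where
  "B2_EPG_rep V E P \<longleftrightarrow>
     (\<forall>u\<in>V. valid_path2 (P u)) \<and>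
     (\<forall>u\<in>V. \<forall>v\<in>V. u \<noteq> v \<longrightarrow> (E u v \<longleftrightarrow> edges (P u) \<inter> edges (P v) \<noteq> {}))"

definition simple_graph :: "'v set \<Rightarrow> ('v \<Rightarrow> 'v \<Rightarrow> bool) \<Rightarrow> bool" where
  "simple_graph V E \<longleftrightarrow> finite V \<and> (\<forall>u v. E u v \<longrightarrow> E v u) \<and> (\<forall>u. \<not> E u u)"

definition is_clique :: "'v set \<Rightarrow> ('v \<Rightarrow> 'v \<Rightarrow> bool) \<Rightarrow> 'v set \<Rightarrow> bool" where
  "is_clique V E X \<longleftrightarrow> X \<subseteq> V \<and> (\<forall>u\<in>X. \<forall>v\<in>X. u \<noteq> v \<longrightarrow> E u v)"

end

theory Submission
  imports Defs
begin

text \<open>Suppose the U-vertices of the clique lie on four distinct rows and the Z-vertices on four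
  distinct columns, and pick one witness for each. Two U-vertices on different rows can only
  share an edge in a common column, so their column pairs pairwise meet; a U-vertex and a
  Z-vertex share an edge only if the row of the former is a row of the latter or the column of
  the latter is a column of the former. Since a Z-vertex has only two rows, each of the four
  columns lies in the column pair of at least two of the four U-vertices. Fixing one U-vertex,
  two of the columns avoid its pair, and each lies in two of the remaining three pairs; hence
  some pair consists of exactly these two columns, and it misses the fixed pair.\<close>

fun U_row :: "path2 \<Rightarrow> int" where
  "U_row (UPath x1 y1 x2 y2 y3) = y2"
| "U_row (ZPath _ _ _ _ _) = undefined"

fun U_cols :: "path2 \<Rightarrow> int set" where
  "U_cols (UPath x1 y1 x2 y2 y3) = {x1, x2}"
| "U_cols (ZPath _ _ _ _ _) = {}"

fun Z_rows :: "path2 \<Rightarrow> int set" where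
  "Z_rows (ZPath x1 y1 x2 y2 x3) = {y1, y2}"
| "Z_rows (UPath _ _ _ _ _) = {}"

fun Z_col :: "path2 \<Rightarrow> int" where
  "Z_col (ZPath x1 y1 x2 y2 x3) = x2"
| "Z_col (UPath _ _ _ _ _) = undefined"

lemma finite_U_cols [simp]: "finite (U_cols p)"
  by (cases p) auto

lemma card_U_cols_le: "card (U_cols p) \<le> 2"
  by (cases p) (auto simp: card_insert_if)

lemma finite_Z_rows [simp]: "finite (Z_rows p)"
  by (cases p) auto

lemma card_Z_rows_le: "card (Z_rows p) \<le> 2"
  by (cases p) (auto simp: card_insert_if)

lemma intersects_row_U_row:
  assumes "valid_path2 p" "is_U p"
  shows "intersects_row p (U_row p)"
proof (cases p)
  case (UPath x1 y1 x2 y2 y3)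
  with assms have "HE (min x1 x2) y2 \<in> hseg x1 x2 y2" by (auto simp: hseg_def)
  with UPath show ?thesis by (auto simp: intersects_row_def)
qed (use assms in simp)

lemma intersects_col_Z_col:
  assumes "valid_path2 p" "is_Z p"
  shows "intersects_col p (Z_col p)"
proof (cases p)
  case (ZPath x1 y1 x2 y2 x3)
  with assms have "VE x2 (min y1 y2) \<in> vseg x2 y1 y2" by (auto simp: vseg_def)
  with ZPath show ?thesis by (auto simp: intersects_col_def)
qed (use assms in simp)

lemma shared_edge_U_Z:
  assumes "is_U p" "is_Z q" "edges p \<inter> edges q \<noteq> {}"
  shows "U_row p \<in> Z_rows q \<or> Z_col q \<in> U_cols p"
  using assms by (cases p; cases q) (auto simp: hseg_def vseg_def)

lemma shared_edge_U_U:
  assumes "is_U p" "is_U q" "edges p \<inter> edges q \<noteq> {}" "U_row p \<noteq> U_row q"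
  shows "U_cols p \<inter> U_cols q \<noteq> {}"
  using assms by (cases p; cases q) (auto simp: hseg_def vseg_def)

lemma no_four_by_four_row_column_pairs:
  fixes cols :: "'r \<Rightarrow> 'c set" and rows :: "'c \<Rightarrow> 'r set"
  assumes R: "4 \<le> card R" and C: "4 \<le> card C"
    and cols: "\<And>y. y \<in> R \<Longrightarrow> finite (cols y) \<and> card (cols y) \<le> 2"
    and rows: "\<And>x. x \<in> C \<Longrightarrow> finite (rows x) \<and> card (rows x) \<le> 2"
    and meet: "\<And>y x. y \<in> R \<Longrightarrow> x \<in> C \<Longrightarrow> y \<in> rows x \<or> x \<in> cols y"
    and pairwise: "\<And>y y'. y \<in> R \<Longrightarrow> y' \<in> R \<Longrightarrow> y \<noteq> y' \<Longrightarrow> cols y \<inter> cols y' \<noteq> {}"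
  shows False
proof -
  have in_one_of_three: "x \<in> cols y1 \<or> x \<in> cols y2 \<or> x \<in> cols y3"
    if "x \<in> C" "{y1, y2, y3} \<subseteq> R" "y1 \<noteq> y2" "y1 \<noteq> y3" "y2 \<noteq> y3" for x y1 y2 y3
  proof (rule ccontr)
    assume "\<not> ?thesis"
    with that meet have "{y1, y2, y3} \<subseteq> rows x" by auto
    with rows[OF \<open>x \<in> C\<close>] have "card {y1, y2, y3} \<le> 2" by (meson card_mono order_trans)
    with that show False by simp
  qed
  obtain y0 where y0: "y0 \<in> R" using R by fastforce
  have "3 \<le> card (R - {y0})" using R y0 by (simp add: card_Diff_singleton)
  then obtain y1 y2 y3 where y123: "{y1, y2, y3} \<subseteq> R - {y0}" "y1 \<noteq> y2" "y1 \<noteq> y3" "y2 \<noteq> y3"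
    by (metis obtain_subset_with_card_n card_3_iff)
  have "card C - card (cols y0) \<le> card (C - cols y0)"
    using cols[OF y0] by (intro diff_card_le_card_Diff) auto
  then have "2 \<le> card (C - cols y0)" using C cols[OF y0] by linarith
  then obtain x1 x2 where x12: "{x1, x2} \<subseteq> C - cols y0" "x1 \<noteq> x2"
    by (metis obtain_subset_with_card_n card_2_iff)
  have in_two_of_three:
    "(x \<in> cols y1 \<or> x \<in> cols y2) \<and> (x \<in> cols y1 \<or> x \<in> cols y3) \<and> (x \<in> cols y2 \<or> x \<in> cols y3)"
    if "x \<in> C - cols y0" for x
    using in_one_of_three[of x y0 y1 y2] in_one_of_three[of x y0 y1 y3] in_one_of_three[of x y0 y2 y3]
      that y0 y123 by auto
  obtain yk where yk: "yk \<in> R - {y0}" "{x1, x2} \<subseteq> cols yk"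
    using in_two_of_three[of x1] in_two_of_three[of x2] x12 y123 by blast
  have "cols yk = {x1, x2}"
    using cols[of yk] yk x12 by (metis DiffD1 card_2_iff card_seteq)
  with x12 pairwise[of yk y0] yk y0 show False by auto
qed

definition U_row_set :: "('v \<Rightarrow> path2) \<Rightarrow> 'v set \<Rightarrow> int set" where
  "U_row_set P X = U_row ` P ` {u \<in> X. is_U (P u)}"

definition Z_col_set :: "('v \<Rightarrow> path2) \<Rightarrow> 'v set \<Rightarrow> int set" where
  "Z_col_set P X = Z_col ` P ` {u \<in> X. is_Z (P u)}"

lemma finite_U_row_set: "finite X \<Longrightarrow> finite (U_row_set P X)"
  by (simp add: U_row_set_def)

lemma finite_Z_col_set: "finite X \<Longrightarrow> finite (Z_col_set P X)"
  by (simp add: Z_col_set_def)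

lemma U_row_set_covers:
  assumes "u \<in> X" "valid_path2 (P u)" "is_U (P u)"
  shows "\<exists>y\<in>U_row_set P X. intersects_row (P u) y"
  using assms intersects_row_U_row by (intro bexI[of _ "U_row (P u)"]) (auto simp: U_row_set_def)

lemma Z_col_set_covers:
  assumes "u \<in> X" "valid_path2 (P u)" "is_Z (P u)"
  shows "\<exists>x\<in>Z_col_set P X. intersects_col (P u) x"
  using assms intersects_col_Z_col by (intro bexI[of _ "Z_col (P u)"]) (auto simp: Z_col_set_def)

lemma card_U_row_set_or_Z_col_set_le_3:
  assumes shared: "\<And>u v. u \<in> X \<Longrightarrow> v \<in> X \<Longrightarrow> u \<noteq> v \<Longrightarrow> edges (P u) \<inter> edges (P v) \<noteq> {}"
  shows "card (U_row_set P X) \<le> 3 \<or> card (Z_col_set P X) \<le> 3"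
    (is "card ?R \<le> 3 \<or> card ?C \<le> 3")
proof (rule ccontr)
  assume "\<not> ?thesis"
  then have R: "4 \<le> card ?R" and C: "4 \<le> card ?C" by auto
  have "\<forall>y\<in>?R. \<exists>u. u \<in> X \<and> is_U (P u) \<and> U_row (P u) = y" by (auto simp: U_row_set_def)
  then obtain uy where uy: "\<And>y. y \<in> ?R \<Longrightarrow> uy y \<in> X \<and> is_U (P (uy y)) \<and> U_row (P (uy y)) = y"
    by metis
  have "\<forall>x\<in>?C. \<exists>z. z \<in> X \<and> is_Z (P z) \<and> Z_col (P z) = x" by (auto simp: Z_col_set_def)
  then obtain zx where zx: "\<And>x. x \<in> ?C \<Longrightarrow> zx x \<in> X \<and> is_Z (P (zx x)) \<and> Z_col (P (zx x)) = x"
    by metis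
  show False
  proof (rule no_four_by_four_row_column_pairs[OF R C, of "\<lambda>y. U_cols (P (uy y))" "\<lambda>x. Z_rows (P (zx x))"])
    fix y x assume "y \<in> ?R" "x \<in> ?C"
    note u = uy[OF \<open>y \<in> ?R\<close>] and z = zx[OF \<open>x \<in> ?C\<close>]
    then have "uy y \<noteq> zx x" by (cases "P (uy y)") auto
    with u z have "edges (P (uy y)) \<inter> edges (P (zx x)) \<noteq> {}" by (intro shared) auto
    with u z show "y \<in> Z_rows (P (zx x)) \<or> x \<in> U_cols (P (uy y))"
      using shared_edge_U_Z[of "P (uy y)" "P (zx x)"] by auto
  next
    fix y y' assume "y \<in> ?R" "y' \<in> ?R" "y \<noteq> y'"
    note u = uy[OF \<open>y \<in> ?R\<close>] and u' = uy[OF \<open>y' \<in> ?R\<close>]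
    with \<open>y \<noteq> y'\<close> have "edges (P (uy y)) \<inter> edges (P (uy y')) \<noteq> {}" by (intro shared) auto
    with u u' \<open>y \<noteq> y'\<close> show "U_cols (P (uy y)) \<inter> U_cols (P (uy y')) \<noteq> {}"
      using shared_edge_U_U[of "P (uy y)" "P (uy y')"] by auto
  qed (simp_all add: card_U_cols_le card_Z_rows_le)
qed

theorem lemma10:
  fixes V :: "'v set" and E :: "'v \<Rightarrow> 'v \<Rightarrow> bool" and P :: "'v \<Rightarrow> path2" and X :: "'v set"
  assumes "simple_graph V E"
    and "B2_EPG_rep V E P"
    and "is_clique V E X"
  shows "(\<exists>R :: int set. finite R \<and> card R \<le> 3 \<and>
            (\<forall>u\<in>X. is_U (P u) \<longrightarrow> (\<exists>y\<in>R. intersects_row (P u) y)))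
       \<or> (\<exists>C :: int set. finite C \<and> card C \<le> 3 \<and>
            (\<forall>u\<in>X. is_Z (P u) \<longrightarrow> (\<exists>x\<in>C. intersects_col (P u) x)))"
proof -
  have "finite X" "X \<subseteq> V"
    using assms(1,3) by (auto simp: simple_graph_def is_clique_def intro: finite_subset)
  then have valid: "\<And>u. u \<in> X \<Longrightarrow> valid_path2 (P u)"
    using assms(2) by (auto simp: B2_EPG_rep_def)
  have "\<And>u v. u \<in> X \<Longrightarrow> v \<in> X \<Longrightarrow> u \<noteq> v \<Longrightarrow> edges (P u) \<inter> edges (P v) \<noteq> {}"
    using assms(2,3) \<open>X \<subseteq> V\<close> unfolding B2_EPG_rep_def is_clique_def by blast
  then have "card (U_row_set P X) \<le> 3 \<or> card (Z_col_set P X) \<le> 3"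
    by (rule card_U_row_set_or_Z_col_set_le_3)
  then show ?thesis
  proof (elim disjE)
    assume "card (U_row_set P X) \<le> 3"
    with \<open>finite X\<close> valid show ?thesis
      by (intro disjI1 exI[of _ "U_row_set P X"]) (auto intro: finite_U_row_set U_row_set_covers)
  next
    assume "card (Z_col_set P X) \<le> 3"
    with \<open>finite X\<close> valid show ?thesis
      by (intro disjI2 exI[of _ "Z_col_set P X"]) (auto intro: finite_Z_col_set Z_col_set_covers)
  qed
qed

end
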